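(* The average-cost relative value function $V$ (the limit $\lim_{\alpha\uparrow1}(V_\alpha - V_\alpha(0))$ solving the average-cost dynamic programming equation with $V(0)=0$) is increasing in its argument: $y>z$ implies $V(z)\le V(y)$.
   Context: Single-server problem: Bernoulli($p$) arrivals, queue $X_{t+1}=X_t-D_{t+1}+\nu_t\xi_{t+1}$ on $\mathcal N=\{0,1,\dots\}$, $\nu_t\in\{0,1\}$ (1 active, 0 passive), $D_{t+1}\sim\mathrm{Binomial}(x,q/x)$ given $X_t=x\ge1$, no departures at $x=0$; $C>0$, $1>q>2p>0$, $\lambda\in\mathbb R$, cost $c(x,\nu)=Cx+(1-\nu)\lambda$. For $0<\alpha<1$, $V_\alpha(x)$ is the optimal $\alpha$-discounted cost from $x$ over admissible controls. The average-cost DP equation is $V(x)=Cx-\beta+\min\big(\mathbb{E}_x[pV(x-D+1)+(1-p)V(x-D)],\ \lambda+\mathbb{E}_x[V(x-D)]\big)$ where $\mathbb{E}_x$ is over $D\sim\mathrm{Binomial}(x,q/x)$. *)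

theory Defs
  imports Complex_Main
begin

text \<open>State x = queue length. Action: True = active (arrivals admitted, nu = 1),
  False = passive (nu = 0, extra cost lam).
  Given X_t = x, D ~ Binomial(x, q/x) (for x = 0 the formula below gives D = 0 a.s.),
  arrival xi ~ Bernoulli(p) independent of D, next state x - D + nu * xi.\<close>

definition dprob :: "real \<Rightarrow> nat \<Rightarrow> nat \<Rightarrow> real" where
  "dprob q x d = real (x choose d) * (q / real x) ^ d * (1 - q / real x) ^ (x - d)"

text \<open>An admissible (history-dependent, deterministic) control: a function of the
  history of observed states X_0, ..., X_t (last element = current state).\<close>
type_synonym policy = "nat list \<Rightarrow> bool"

fun Jfin :: "real \<Rightarrow> real \<Rightarrow> real \<Rightarrow> real \<Rightarrow> real \<Rightarrow> policy \<Rightarrow> nat \<Rightarrow> nat list \<Rightarrow> nat \<Rightarrow> real" where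
  "Jfin p q C lam \<alpha> pol 0 h x = 0"
| "Jfin p q C lam \<alpha> pol (Suc n) h x =
     (let h' = h @ [x]; a = pol h' in
       C * real x + (if a then 0 else lam)
       + \<alpha> * (\<Sum>d\<le>x. dprob q x d *
            (if a then p * Jfin p q C lam \<alpha> pol n h' (x - d + 1)
                       + (1 - p) * Jfin p q C lam \<alpha> pol n h' (x - d)
             else Jfin p q C lam \<alpha> pol n h' (x - d))))"

definition disc_cost :: "real \<Rightarrow> real \<Rightarrow> real \<Rightarrow> real \<Rightarrow> real \<Rightarrow> policy \<Rightarrow> nat \<Rightarrow> real" where
  "disc_cost p q C lam \<alpha> pol x = lim (\<lambda>n. Jfin p q C lam \<alpha> pol n [] x)"

definition Valpha :: "real \<Rightarrow> real \<Rightarrow> real \<Rightarrow> real \<Rightarrow> real \<Rightarrow> nat \<Rightarrow> real" where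
  "Valpha p q C lam \<alpha> x = (INF pol. disc_cost p q C lam \<alpha> pol x)"

end

theory Submission imports Defs begin

text \<open>For a fixed discount factor \<alpha> the optimal cost is increasing in the state. This is
  seen through value iteration: from x customers the number left after service is
  Binomial(x, 1 - q/x), stochastically increasing in x, so every finite-horizon optimum is
  increasing. The n-horizon optimum is the cost of a Markov policy and a lower bound for the
  n-period cost of every policy, and since the queue grows by at most one per period,
  n-period costs are within \<alpha>^n O(x + n) of discounted costs. Hence V_\<alpha> is increasing, and
  the inequality V_\<alpha>(z) - V_\<alpha>(0) \<le> V_\<alpha>(y) - V_\<alpha>(0) passes to the limit \<alpha> \<up> 1.\<close>

definition binomial_expectation :: "nat \<Rightarrow> real \<Rightarrow> (nat \<Rightarrow> real) \<Rightarrow> real" where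
  "binomial_expectation n a f = (\<Sum>s\<le>n. real (n choose s) * a ^ s * (1 - a) ^ (n - s) * f s)"

lemma binomial_expectation_Suc:
  "binomial_expectation (Suc n) a f =
     a * binomial_expectation n a (\<lambda>s. f (Suc s)) + (1 - a) * binomial_expectation n a f"
proof -
  let ?b = "1 - a"
  have split: "binomial_expectation (Suc n) a f = ?b ^ Suc n * f 0
     + (\<Sum>s\<le>n. real (n choose s) * a ^ Suc s * ?b ^ (n - s) * f (Suc s))
     + (\<Sum>s\<le>n. real (n choose Suc s) * a ^ Suc s * ?b ^ (n - s) * f (Suc s))"
    unfolding binomial_expectation_def sum.atMost_Suc_shift
    by (simp add: sum.distrib algebra_simps)
  have success: "(\<Sum>s\<le>n. real (n choose s) * a ^ Suc s * ?b ^ (n - s) * f (Suc s))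
      = a * binomial_expectation n a (\<lambda>s. f (Suc s))"
    unfolding binomial_expectation_def sum_distrib_left
    by (rule sum.cong) (auto simp: algebra_simps)
  have "?b * binomial_expectation n a f
      = ?b * (\<Sum>s\<le>Suc n. real (n choose s) * a ^ s * ?b ^ (n - s) * f s)"
    unfolding binomial_expectation_def by simp
  also have "\<dots> = ?b ^ Suc n * f 0
        + (\<Sum>s\<le>n. real (n choose Suc s) * a ^ Suc s * (?b * ?b ^ (n - Suc s)) * f (Suc s))"
    unfolding sum.atMost_Suc_shift sum_distrib_left distrib_left by (simp add: mult_ac)
  also have "(\<Sum>s\<le>n. real (n choose Suc s) * a ^ Suc s * (?b * ?b ^ (n - Suc s)) * f (Suc s))
      = (\<Sum>s\<le>n. real (n choose Suc s) * a ^ Suc s * ?b ^ (n - s) * f (Suc s))"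
  proof (rule sum.cong)
    fix s assume "s \<in> {..n}"
    then show "real (n choose Suc s) * a ^ Suc s * (?b * ?b ^ (n - Suc s)) * f (Suc s)
        = real (n choose Suc s) * a ^ Suc s * ?b ^ (n - s) * f (Suc s)"
    proof (cases "s = n")
      case False
      with \<open>s \<in> {..n}\<close> have "n - s = Suc (n - Suc s)" by auto
      then show ?thesis by simp
    qed simp
  qed simp
  finally show ?thesis using split success by simp
qed

lemma binomial_expectation_const: "binomial_expectation n a (\<lambda>_. c) = c"
  using binomial_ring[of a "1 - a" n]
  by (simp add: binomial_expectation_def sum_distrib_right[symmetric])

lemma binomial_expectation_mono:
  assumes "0 \<le> a" "a \<le> 1" "\<And>s. s \<le> n \<Longrightarrow> f s \<le> g s"
  shows "binomial_expectation n a f \<le> binomial_expectation n a g"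
  unfolding binomial_expectation_def using assms by (intro sum_mono mult_left_mono) auto

lemma binomial_expectation_le_shift:
  assumes "mono f" "0 \<le> a" "a \<le> 1"
  shows "binomial_expectation n a f \<le> binomial_expectation n a (\<lambda>s. f (Suc s))"
  using assms by (intro binomial_expectation_mono) (auto simp: mono_def)

lemma binomial_expectation_mono_prob:
  assumes "mono f" "0 \<le> a" "a \<le> a'" "a' \<le> 1"
  shows "binomial_expectation n a f \<le> binomial_expectation n a' f"
  using assms(1)
proof (induction n arbitrary: f)
  case 0
  then show ?case by (simp add: binomial_expectation_def)
next
  case (Suc n)
  let ?E = "binomial_expectation n"
  have shift_mono: "mono (\<lambda>s. f (Suc s))"
    using Suc.prems by (auto simp: mono_def)
  have "0 \<le> (a' - a) * (?E a (\<lambda>s. f (Suc s)) - ?E a f)"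
    using binomial_expectation_le_shift[OF Suc.prems, of a n] assms by simp
  then have "binomial_expectation (Suc n) a f \<le> a' * ?E a (\<lambda>s. f (Suc s)) + (1 - a') * ?E a f"
    by (simp add: binomial_expectation_Suc algebra_simps)
  also have "\<dots> \<le> a' * ?E a' (\<lambda>s. f (Suc s)) + (1 - a') * ?E a' f"
    using Suc.IH[OF shift_mono] Suc.IH[OF Suc.prems] assms
    by (intro add_mono mult_left_mono) auto
  finally show ?case by (simp add: binomial_expectation_Suc)
qed

definition exp_passive :: "real \<Rightarrow> nat \<Rightarrow> (nat \<Rightarrow> real) \<Rightarrow> real" where
  "exp_passive q x f = (\<Sum>d\<le>x. dprob q x d * f (x - d))"

definition exp_active :: "real \<Rightarrow> real \<Rightarrow> nat \<Rightarrow> (nat \<Rightarrow> real) \<Rightarrow> real" where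
  "exp_active p q x f = exp_passive q x (\<lambda>s. p * f (Suc s) + (1 - p) * f s)"

lemma exp_passive_eq_binomial_expectation:
  "exp_passive q x f = binomial_expectation x (1 - q / real x) f"
proof -
  have "exp_passive q x f = (\<Sum>d=0..x. dprob q x (x + 0 - d) * f (x - (x + 0 - d)))"
    unfolding exp_passive_def atLeast0AtMost[symmetric] by (rule sum.atLeastAtMost_rev)
  also have "\<dots> = binomial_expectation x (1 - q / real x) f"
    unfolding binomial_expectation_def atLeast0AtMost
  proof (rule sum.cong)
    fix s assume "s \<in> {..x}"
    then show "dprob q x (x + 0 - s) * f (x - (x + 0 - s)) =
      real (x choose s) * (1 - q / real x) ^ s * (1 - (1 - q / real x)) ^ (x - s) * f s"
      by (auto simp: dprob_def binomial_symmetric[of s x] mult_ac)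
  qed simp
  finally show ?thesis .
qed

lemma exp_passive_const: "exp_passive q x (\<lambda>_. c) = c"
  by (simp add: exp_passive_eq_binomial_expectation binomial_expectation_const)

lemma exp_passive_diff: "exp_passive q x f - exp_passive q x g = exp_passive q x (\<lambda>s. f s - g s)"
  unfolding exp_passive_def by (simp add: sum_subtractf[symmetric] algebra_simps)

lemma exp_active_diff: "exp_active p q x f - exp_active p q x g = exp_active p q x (\<lambda>s. f s - g s)"
  unfolding exp_active_def exp_passive_diff by (simp add: algebra_simps)

lemma dprob_nonneg:
  assumes "0 \<le> q" "q \<le> 1" "d \<le> x"
  shows "0 \<le> dprob q x d"
  using assms unfolding dprob_def
  by (cases "x = 0") (auto simp: field_simps intro!: mult_nonneg_nonneg)

context
  fixes q :: real
  assumes q: "0 \<le> q" "q \<le> 1"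
begin

lemma exp_passive_mono:
  assumes "\<And>s. s \<le> x \<Longrightarrow> f s \<le> g s"
  shows "exp_passive q x f \<le> exp_passive q x g"
  unfolding exp_passive_def using assms dprob_nonneg[OF q] by (intro sum_mono mult_left_mono) auto

lemma exp_passive_abs_le:
  assumes "\<And>s. s \<le> x \<Longrightarrow> \<bar>f s\<bar> \<le> M"
  shows "\<bar>exp_passive q x f\<bar> \<le> M"
proof -
  have "exp_passive q x f \<le> exp_passive q x (\<lambda>_. M)"
    using assms by (intro exp_passive_mono) (auto simp: abs_le_iff)
  moreover have "exp_passive q x (\<lambda>_. - M) \<le> exp_passive q x f"
    using assms by (intro exp_passive_mono) (auto simp: abs_le_iff, fastforce)
  ultimately show ?thesis by (simp add: exp_passive_const)
qed

text \<open>The queue left after service from x is Binomial(x, 1 - q/x); from x + 1 it is one more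
  trial with a larger success probability.\<close>

lemma exp_passive_mono_Suc:
  assumes "mono f"
  shows "exp_passive q x f \<le> exp_passive q (Suc x) f"
proof -
  define b where "b = 1 - q / real (Suc x)"
  have b: "0 \<le> b" "b \<le> 1" using q by (auto simp: b_def field_simps)
  have "binomial_expectation x (1 - q / real x) f \<le> binomial_expectation x b f"
  proof (cases "x = 0")
    case True
    then show ?thesis by (simp add: binomial_expectation_def)
  next
    case False
    then have "q / real (Suc x) \<le> q / real x" "q / real x \<le> 1"
      using q by (auto intro: divide_left_mono simp: field_simps)
    then show ?thesis
      using b assms by (intro binomial_expectation_mono_prob) (auto simp: b_def)
  qed
  also have "binomial_expectation x b f
      \<le> b * binomial_expectation x b (\<lambda>s. f (Suc s)) + (1 - b) * binomial_expectation x b f"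
    using mult_left_mono[OF binomial_expectation_le_shift[OF assms b, of x] b(1)]
    by (simp add: algebra_simps)
  also have "\<dots> = exp_passive q (Suc x) f"
    by (simp add: exp_passive_eq_binomial_expectation binomial_expectation_Suc b_def)
  finally show ?thesis by (simp add: exp_passive_eq_binomial_expectation)
qed

lemma exp_passive_mono_state:
  assumes "mono f" "x \<le> y"
  shows "exp_passive q x f \<le> exp_passive q y f"
  using lift_Suc_mono_le[of "\<lambda>x. exp_passive q x f"] exp_passive_mono_Suc[OF assms(1)] assms(2)
  by blast

context
  fixes p :: real
  assumes p: "0 \<le> p" "p \<le> 1"
begin

lemma exp_active_mono:
  assumes "\<And>s. s \<le> Suc x \<Longrightarrow> f s \<le> g s"
  shows "exp_active p q x f \<le> exp_active p q x g"
  unfolding exp_active_def using assms p by (intro exp_passive_mono add_mono mult_left_mono) auto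

lemma exp_active_abs_le:
  assumes "\<And>s. s \<le> Suc x \<Longrightarrow> \<bar>f s\<bar> \<le> M"
  shows "\<bar>exp_active p q x f\<bar> \<le> M"
  unfolding exp_active_def
proof (rule exp_passive_abs_le)
  fix s assume "s \<le> x"
  have "\<bar>p * f (Suc s) + (1 - p) * f s\<bar> \<le> \<bar>p * f (Suc s)\<bar> + \<bar>(1 - p) * f s\<bar>"
    by (rule abs_triangle_ineq)
  also have "\<dots> = p * \<bar>f (Suc s)\<bar> + (1 - p) * \<bar>f s\<bar>"
    using p by (simp add: abs_mult)
  also have "\<dots> \<le> p * M + (1 - p) * M"
    using assms p \<open>s \<le> x\<close> by (intro add_mono mult_left_mono) auto
  finally show "\<bar>p * f (Suc s) + (1 - p) * f s\<bar> \<le> M"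
    by (simp add: algebra_simps)
qed

lemma exp_active_mono_state:
  assumes "mono f" "x \<le> y"
  shows "exp_active p q x f \<le> exp_active p q y f"
proof -
  have "mono (\<lambda>s. p * f (Suc s) + (1 - p) * f s)"
    using assms(1) p by (intro monoI add_mono mult_left_mono) (auto dest: monoD)
  then show ?thesis
    unfolding exp_active_def using assms(2) by (rule exp_passive_mono_state)
qed

end

end

lemma Jfin_Suc_exp:
  "Jfin p q C lam \<alpha> pol (Suc n) h x = C * real x +
     (if pol (h @ [x]) then \<alpha> * exp_active p q x (Jfin p q C lam \<alpha> pol n (h @ [x]))
      else lam + \<alpha> * exp_passive q x (Jfin p q C lam \<alpha> pol n (h @ [x])))"
  by (cases "pol (h @ [x])")
     (auto simp: Let_def exp_active_def exp_passive_def algebra_simps intro!: sum.cong)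

declare Jfin.simps(2) [simp del]

context
  fixes p q C lam \<alpha> :: real
  assumes p: "0 \<le> p" "p \<le> 1" and q: "0 \<le> q" "q \<le> 1"
    and C: "0 \<le> C" and \<alpha>: "0 \<le> \<alpha>" "\<alpha> < 1"
begin

text \<open>A bound on the discounted cost from x: the queue grows by at most one per period,
  so the period-k cost is at most C (x + k) + |lam|; cost_bound x is the discounted sum of these.\<close>

definition cost_bound :: "nat \<Rightarrow> real" where
  "cost_bound x = (C * real x + \<bar>lam\<bar>) / (1 - \<alpha>) + C * \<alpha> / (1 - \<alpha>)^2"

lemma cost_bound_Suc: "C * real x + \<bar>lam\<bar> + \<alpha> * cost_bound (Suc x) = cost_bound x"
proof -
  have "c * X + l + (1 - d) * ((c * (X + 1) + l) / d + c * (1 - d) / d\<^sup>2)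
      = (c * X + l) / d + c * (1 - d) / d\<^sup>2" if "0 < d" for c X l d :: real
    using that by (simp add: field_simps power2_eq_square)
  from this[of "1 - \<alpha>" C "real x" "\<bar>lam\<bar>"] show ?thesis
    using \<alpha> unfolding cost_bound_def by (simp add: add.commute)
qed

lemma cost_bound_mono: "x \<le> y \<Longrightarrow> cost_bound x \<le> cost_bound y"
  using C \<alpha> unfolding cost_bound_def by (intro add_right_mono divide_right_mono mult_left_mono) auto

lemma cost_bound_nonneg: "0 \<le> cost_bound x"
  using C \<alpha> unfolding cost_bound_def by (intro add_nonneg_nonneg divide_nonneg_nonneg) auto

lemma Jfin_abs_le: "\<bar>Jfin p q C lam \<alpha> pol n h x\<bar> \<le> cost_bound x"
proof (induction n arbitrary: h x)
  case 0
  then show ?case by (simp add: cost_bound_nonneg)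
next
  case (Suc n)
  let ?J = "Jfin p q C lam \<alpha> pol n (h @ [x])"
  have J_le: "\<bar>?J s\<bar> \<le> cost_bound (Suc x)" if "s \<le> Suc x" for s
    using Suc.IH cost_bound_mono[OF that] by (rule order_trans)
  obtain l E where eq: "Jfin p q C lam \<alpha> pol (Suc n) h x = C * real x + l + \<alpha> * E"
    and l: "\<bar>l\<bar> \<le> \<bar>lam\<bar>" and E: "\<bar>E\<bar> \<le> cost_bound (Suc x)"
  proof (cases "pol (h @ [x])")
    case True
    have "\<bar>exp_active p q x ?J\<bar> \<le> cost_bound (Suc x)"
      by (rule exp_active_abs_le[OF q p]) (use J_le in auto)
    with True show thesis by (intro that[of 0 "exp_active p q x ?J"]) (simp_all add: Jfin_Suc_exp)
  next
    case False
    have "\<bar>exp_passive q x ?J\<bar> \<le> cost_bound (Suc x)"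
      by (rule exp_passive_abs_le[OF q]) (use J_le in auto)
    with False show thesis by (intro that[of lam "exp_passive q x ?J"]) (simp_all add: Jfin_Suc_exp)
  qed
  have "\<bar>\<alpha> * E\<bar> \<le> \<alpha> * cost_bound (Suc x)"
    using E \<alpha> by (simp add: abs_mult mult_left_mono)
  then have "\<bar>Jfin p q C lam \<alpha> pol (Suc n) h x\<bar> \<le> C * real x + \<bar>lam\<bar> + \<alpha> * cost_bound (Suc x)"
    using l C abs_triangle_ineq[of "C * real x + l" "\<alpha> * E"] abs_triangle_ineq[of "C * real x" l]
    unfolding eq by simp
  then show ?case by (simp add: cost_bound_Suc)
qed

lemma Jfin_tail: "\<bar>Jfin p q C lam \<alpha> pol (n + m) h x - Jfin p q C lam \<alpha> pol n h x\<bar>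
    \<le> \<alpha> ^ n * cost_bound (x + n)"
proof (induction n arbitrary: h x)
  case 0
  then show ?case using Jfin_abs_le[of pol m h x] by simp
next
  case (Suc n)
  let ?M = "\<alpha> ^ n * cost_bound (Suc x + n)"
  define \<delta> where "\<delta> s = Jfin p q C lam \<alpha> pol (n + m) (h @ [x]) s - Jfin p q C lam \<alpha> pol n (h @ [x]) s"
    for s
  have \<delta>_le: "\<bar>\<delta> s\<bar> \<le> ?M" if "s \<le> Suc x" for s
  proof -
    have "\<alpha> ^ n * cost_bound (s + n) \<le> ?M"
      using \<alpha> that by (intro mult_left_mono cost_bound_mono) auto
    then show ?thesis using Suc.IH[of "h @ [x]" s] unfolding \<delta>_def by linarith
  qed
  define E where "E = (if pol (h @ [x]) then exp_active p q x \<delta> else exp_passive q x \<delta>)"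
  have "Jfin p q C lam \<alpha> pol (Suc n + m) h x - Jfin p q C lam \<alpha> pol (Suc n) h x = \<alpha> * E"
    unfolding E_def \<delta>_def add_Suc Jfin_Suc_exp exp_active_diff[symmetric] exp_passive_diff[symmetric]
    by (simp add: algebra_simps)
  then have "\<bar>Jfin p q C lam \<alpha> pol (Suc n + m) h x - Jfin p q C lam \<alpha> pol (Suc n) h x\<bar> = \<alpha> * \<bar>E\<bar>"
    using \<alpha> by (simp add: abs_mult)
  also have "\<dots> \<le> \<alpha> * ?M"
  proof -
    have "\<bar>exp_active p q x \<delta>\<bar> \<le> ?M"
      by (rule exp_active_abs_le[OF q p]) (rule \<delta>_le)
    moreover have "\<bar>exp_passive q x \<delta>\<bar> \<le> ?M"
      by (rule exp_passive_abs_le[OF q]) (rule \<delta>_le, simp)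
    ultimately show ?thesis
      unfolding E_def using \<alpha> by (intro mult_left_mono) auto
  qed
  also have "\<dots> = \<alpha> ^ Suc n * cost_bound (x + Suc n)"
    by simp
  finally show ?case .
qed

lemma tail_bound_tendsto_zero: "(\<lambda>n. \<alpha> ^ n * cost_bound (x + n)) \<longlonglongrightarrow> 0"
proof -
  have "cost_bound (x + n) = cost_bound x + C / (1 - \<alpha>) * real n" for n
    unfolding cost_bound_def by (simp add: add_divide_distrib distrib_left)
  then have eq: "\<alpha> ^ n * cost_bound (x + n) = cost_bound x * \<alpha> ^ n + C / (1 - \<alpha>) * (real n * \<alpha> ^ n)"
    for n
    by (simp add: algebra_simps)
  have "(\<lambda>n. \<alpha> ^ n) \<longlonglongrightarrow> 0" "(\<lambda>n. real n * \<alpha> ^ n) \<longlonglongrightarrow> 0"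
    using \<alpha> by (auto intro: LIMSEQ_power_zero powser_times_n_limit_0)
  then show ?thesis
    unfolding eq by (intro tendsto_add_zero tendsto_mult_right_zero)
qed

lemma Jfin_convergent: "convergent (\<lambda>n. Jfin p q C lam \<alpha> pol n h x)"
proof -
  let ?X = "\<lambda>n. Jfin p q C lam \<alpha> pol n h x"
  have "Cauchy ?X"
  proof (rule metric_CauchyI)
    fix \<epsilon> :: real assume "0 < \<epsilon>"
    then have "eventually (\<lambda>n. \<alpha> ^ n * cost_bound (x + n) < \<epsilon> / 2) sequentially"
      using tail_bound_tendsto_zero[of x] by (intro order_tendstoD(2)) auto
    then obtain N where N: "\<alpha> ^ N * cost_bound (x + N) < \<epsilon> / 2"
      by (auto simp: eventually_sequentially)
    have "dist (?X m) (?X n) < \<epsilon>" if "m \<ge> N" "n \<ge> N" for m n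
      using Jfin_tail[of pol N "m - N" h x] Jfin_tail[of pol N "n - N" h x] that N
      by (auto simp: dist_real_def abs_le_iff abs_less_iff)
    then show "\<exists>M. \<forall>m\<ge>M. \<forall>n\<ge>M. dist (?X m) (?X n) < \<epsilon>" by blast
  qed
  then show ?thesis by (simp add: Cauchy_convergent_iff)
qed

lemma disc_cost_Jfin_abs_le:
  "\<bar>disc_cost p q C lam \<alpha> pol x - Jfin p q C lam \<alpha> pol n [] x\<bar> \<le> \<alpha> ^ n * cost_bound (x + n)"
proof -
  let ?X = "\<lambda>n. Jfin p q C lam \<alpha> pol n [] x"
  have "?X \<longlonglongrightarrow> disc_cost p q C lam \<alpha> pol x"
    using Jfin_convergent unfolding disc_cost_def by (simp add: convergent_LIMSEQ_iff)
  then have "(\<lambda>m. \<bar>?X (m + n) - ?X n\<bar>) \<longlonglongrightarrow> \<bar>disc_cost p q C lam \<alpha> pol x - ?X n\<bar>"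
    by (intro tendsto_intros LIMSEQ_ignore_initial_segment)
  then show ?thesis
    using Jfin_tail[of pol n _ "[]" x] by (intro LIMSEQ_le_const2) (auto simp: add.commute)
qed

lemma bdd_below_disc_cost: "bdd_below (range (\<lambda>pol. disc_cost p q C lam \<alpha> pol x))"
proof (rule bdd_belowI2)
  fix pol
  show "- cost_bound x \<le> disc_cost p q C lam \<alpha> pol x"
    using abs_le_D2[OF disc_cost_Jfin_abs_le[of pol x 0]] by simp
qed

fun value_iteration :: "nat \<Rightarrow> nat \<Rightarrow> real" where
  "value_iteration 0 x = 0"
| "value_iteration (Suc n) x = C * real x +
     min (\<alpha> * exp_active p q x (value_iteration n)) (lam + \<alpha> * exp_passive q x (value_iteration n))"

lemma value_iteration_le_Jfin: "value_iteration n x \<le> Jfin p q C lam \<alpha> pol n h x"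
proof (induction n arbitrary: h x)
  case 0
  then show ?case by simp
next
  case (Suc n)
  let ?J = "Jfin p q C lam \<alpha> pol n (h @ [x])"
  have "\<alpha> * exp_active p q x (value_iteration n) \<le> \<alpha> * exp_active p q x ?J"
    "\<alpha> * exp_passive q x (value_iteration n) \<le> \<alpha> * exp_passive q x ?J"
    using Suc.IH \<alpha> by (auto intro!: mult_left_mono exp_active_mono[OF q p] exp_passive_mono[OF q])
  then show ?case by (auto simp: Jfin_Suc_exp min_le_iff_disj)
qed

lemma value_iteration_mono: "mono (value_iteration n)"
proof (induction n)
  case 0
  then show ?case by (simp add: mono_def)
next
  case (Suc n)
  show ?case
  proof (rule monoI)
    fix x y :: nat assume "x \<le> y"
    have "exp_active p q x (value_iteration n) \<le> exp_active p q y (value_iteration n)"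
      "exp_passive q x (value_iteration n) \<le> exp_passive q y (value_iteration n)"
      using Suc.IH \<open>x \<le> y\<close> by (auto intro: exp_active_mono_state[OF q p] exp_passive_mono_state[OF q])
    then have "min (\<alpha> * exp_active p q x (value_iteration n)) (lam + \<alpha> * exp_passive q x (value_iteration n))
        \<le> min (\<alpha> * exp_active p q y (value_iteration n)) (lam + \<alpha> * exp_passive q y (value_iteration n))"
      using \<alpha> by (intro min.mono add_left_mono mult_left_mono) auto
    moreover have "C * real x \<le> C * real y"
      using C \<open>x \<le> y\<close> by (simp add: mult_left_mono)
    ultimately show "value_iteration (Suc n) x \<le> value_iteration (Suc n) y"
      by (simp only: value_iteration.simps add_mono)
  qed
qed

definition greedy_active :: "nat \<Rightarrow> nat \<Rightarrow> bool" where
  "greedy_active n x \<longleftrightarrow>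
     \<alpha> * exp_active p q x (value_iteration n) \<le> lam + \<alpha> * exp_passive q x (value_iteration n)"

text \<open>In an N-period problem, at a history h ending with the current state,
  N - length h periods follow the current one.\<close>

definition greedy_policy :: "nat \<Rightarrow> policy" where
  "greedy_policy N h = greedy_active (N - length h) (last h)"

lemma Jfin_greedy_policy:
  "length h + n = N \<Longrightarrow> Jfin p q C lam \<alpha> (greedy_policy N) n h x = value_iteration n x"
proof (induction n arbitrary: h x)
  case 0
  then show ?case by simp
next
  case (Suc n)
  have "Jfin p q C lam \<alpha> (greedy_policy N) n (h @ [x]) = value_iteration n"
    using Suc by auto
  moreover have "N - length (h @ [x]) = n"
    using Suc.prems by simp
  then have "greedy_policy N (h @ [x]) = greedy_active n x"
    by (simp add: greedy_policy_def)
  ultimately show ?case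
    by (simp add: Jfin_Suc_exp greedy_active_def min_def)
qed

lemma Valpha_mono:
  assumes "z \<le> y"
  shows "Valpha p q C lam \<alpha> z \<le> Valpha p q C lam \<alpha> y"
  unfolding Valpha_def[of _ _ _ _ _ y]
proof (rule cINF_greatest)
  fix pol
  let ?tail = "\<lambda>x n. \<alpha> ^ n * cost_bound (x + n)"
  have "Valpha p q C lam \<alpha> z \<le> disc_cost p q C lam \<alpha> pol y + (?tail y n + ?tail z n)" for n
  proof -
    have "Valpha p q C lam \<alpha> z \<le> disc_cost p q C lam \<alpha> (greedy_policy n) z"
      unfolding Valpha_def by (rule cINF_lower[OF bdd_below_disc_cost]) simp
    also have "\<dots> \<le> Jfin p q C lam \<alpha> (greedy_policy n) n [] z + ?tail z n"
      using disc_cost_Jfin_abs_le[of "greedy_policy n" z n] by linarith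
    also have "Jfin p q C lam \<alpha> (greedy_policy n) n [] z = value_iteration n z"
      by (simp add: Jfin_greedy_policy)
    also have "value_iteration n z \<le> value_iteration n y"
      using value_iteration_mono assms by (rule monoD)
    also have "value_iteration n y \<le> Jfin p q C lam \<alpha> pol n [] y"
      by (rule value_iteration_le_Jfin)
    also have "\<dots> \<le> disc_cost p q C lam \<alpha> pol y + ?tail y n"
      using disc_cost_Jfin_abs_le[of pol y n] by linarith
    finally show ?thesis by simp
  qed
  moreover have "(\<lambda>n. disc_cost p q C lam \<alpha> pol y + (?tail y n + ?tail z n))
      \<longlonglongrightarrow> disc_cost p q C lam \<alpha> pol y + (0 + 0)"
    by (intro tendsto_intros tail_bound_tendsto_zero)
  ultimately show "Valpha p q C lam \<alpha> z \<le> disc_cost p q C lam \<alpha> pol y"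
    by (intro LIMSEQ_le_const) auto
qed simp

end

theorem lemma5:
  fixes p q C lam :: real and V :: "nat \<Rightarrow> real" and y z :: nat
  assumes "C > 0" and "0 < p" and "2 * p < q" and "q < 1"
    and "\<forall>x. ((\<lambda>\<alpha>. Valpha p q C lam \<alpha> x - Valpha p q C lam \<alpha> 0) \<longlongrightarrow> V x) (at_left 1)"
    and "y > z"
  shows "V z \<le> V y"
proof -
  have "Valpha p q C lam \<alpha> z \<le> Valpha p q C lam \<alpha> y" if "\<alpha> \<in> {0<..<1}" for \<alpha>
    using assms that by (intro Valpha_mono) auto
  then have "eventually (\<lambda>\<alpha>. Valpha p q C lam \<alpha> z - Valpha p q C lam \<alpha> 0
      \<le> Valpha p q C lam \<alpha> y - Valpha p q C lam \<alpha> 0) (at_left 1)"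
    using eventually_at_left_real[OF zero_less_one] by (auto elim: eventually_mono)
  with assms(5) show ?thesis
    by (blast intro: tendsto_le[OF trivial_limit_at_left_real])
qed

end
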